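(* Let $\Phi=\{\varphi_j\}_{j=1}^n\subset\mathbb{C}^d$ be an equiangular tight frame which is triply covariant. Then $d=1$, $n=d$, or $n=d+1$. (That is, the only non-trivial triply covariant equiangular tight frames are orthonormal bases and simplices.)
   Context: A set $\Phi=\{\varphi_j\}_{j=1}^n\subset\mathbb{C}^d$ is an equiangular tight frame (ETF) if (1) for all $x\in\mathbb{C}^d$, $x=\frac{d}{n}\sum_{j=1}^n\langle x,\varphi_j\rangle\varphi_j$; (2) $\|\varphi_j\|=1$ for all $j$; (3) there is $\alpha\ge 0$ with $|\langle\varphi_j,\varphi_k\rangle|=\alpha$ for all $j\neq k$. Let $G$ be the group of unitary operators $U$ on $\mathbb{C}^d$ such that there is a permutation $\sigma$ of $\{1,\dots,n\}$ with $U\varphi_j\varphi_j^*U^*=\varphi_{\sigma(j)}\varphi_{\sigma(j)}^*$ for all $j$; the symmetry group of $\Phi$ is $G/S^1$ (i.e. $G$ modulo global unimodular phase factors), which acts on $\{1,\dots,n\}$ via these permutations. $\Phi$ is called $k$-covariant if this action is $k$-transitive, i.e. maps every ordered $k$-tuple of distinct indices to every ordered $k$-tuple of distinct indices; triply covariant means $3$-covariant. The triple product is $\mathrm{TP}(j,k,\ell)=\langle\varphi_j,\varphi_k\rangle\langle\varphi_k,\varphi_\ell\rangle\langle\varphi_\ell,\varphi_j\rangle$, and $\Phi$ is a simplex if all triple products of distinct indices are real and negative. *)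

theory Defs
  imports "HOL-Analysis.Analysis"
begin

text \<open>Vectors in C^d are complex^'d with d = CARD('d); frame vectors are indexed by {1..n}.\<close>

definition cinner :: "complex^'d \<Rightarrow> complex^'d \<Rightarrow> complex" where
  "cinner x y = (\<Sum>i\<in>UNIV. x$i * cnj (y$i))"

definition cadj :: "complex^'d^'d \<Rightarrow> complex^'d^'d" where
  "cadj U = (\<chi> i j. cnj (U$j$i))"

definition unitary :: "complex^'d^'d \<Rightarrow> bool" where
  "unitary U \<longleftrightarrow> U ** cadj U = mat 1 \<and> cadj U ** U = mat 1"

definition outer :: "complex^'d \<Rightarrow> complex^'d^'d" where
  "outer v = (\<chi> i j. v$i * cnj (v$j))"

definition is_ETF :: "nat \<Rightarrow> (nat \<Rightarrow> complex^'d) \<Rightarrow> bool" where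
  "is_ETF n \<phi> \<longleftrightarrow>
     (\<forall>x::complex^'d. x = complex_of_real (real CARD('d) / real n) *s
                         (\<Sum>j\<in>{1..n}. cinner x (\<phi> j) *s \<phi> j))
   \<and> (\<forall>j\<in>{1..n}. norm (\<phi> j) = 1)
   \<and> (\<exists>\<alpha>::real. \<alpha> \<ge> 0 \<and> (\<forall>j\<in>{1..n}. \<forall>k\<in>{1..n}. j \<noteq> k \<longrightarrow> cmod (cinner (\<phi> j) (\<phi> k)) = \<alpha>))"

text \<open>Permutations of the index set induced by the symmetry group (unitaries modulo phases).\<close>
definition induced_perms :: "nat \<Rightarrow> (nat \<Rightarrow> complex^'d) \<Rightarrow> (nat \<Rightarrow> nat) set" where
  "induced_perms n \<phi> = {\<sigma>. \<sigma> permutes {1..n} \<and>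
      (\<exists>U::complex^'d^'d. unitary U \<and>
          (\<forall>j\<in>{1..n}. U ** outer (\<phi> j) ** cadj U = outer (\<phi> (\<sigma> j))))}"

text \<open>k-covariance: the action is k-transitive on ordered k-tuples of distinct indices
  (tuples are functions on {..<k}).\<close>
definition k_covariant :: "nat \<Rightarrow> nat \<Rightarrow> (nat \<Rightarrow> complex^'d) \<Rightarrow> bool" where
  "k_covariant k n \<phi> \<longleftrightarrow>
     (\<forall>a b. inj_on a {..<k} \<and> a ` {..<k} \<subseteq> {1..n} \<and>
            inj_on b {..<k} \<and> b ` {..<k} \<subseteq> {1..n} \<longrightarrow>
        (\<exists>\<sigma>\<in>induced_perms n \<phi>. \<forall>i<k. \<sigma> (a i) = b i))"

end

theory Submission
  imports Defs
begin

text \<open>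
  The Gram matrix \<open>G\<close> of a tight frame satisfies \<open>G = (d/n) G\<^sup>2\<close>. A triple product is the
  trace of a product of three rank-one projections, hence invariant under the symmetry group;
  by triple covariance all triple products of distinct indices equal one number \<open>T\<close>. Swapping
  two indices conjugates a triple product, so \<open>T\<close> is real, and \<open>|T| = \<alpha>\<^sup>3\<close>. Comparing a
  diagonal entry of \<open>G = (d/n) G\<^sup>2\<close> gives \<open>n = d + d (n - 1) \<alpha>\<^sup>2\<close>, and an off-diagonal entry,
  multiplied by its conjugate, gives \<open>n \<alpha>\<^sup>2 = d (2 \<alpha>\<^sup>2 + (n - 2) T)\<close>. Eliminating \<open>\<alpha>\<close> and \<open>T\<close>
  leaves \<open>(d - 1) (n - d - 1) n\<^sup>2 = 0\<close>.
\<close>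

lemma cinner_scale_left: "cinner (a *s x) y = a * cinner x y"
  by (simp add: cinner_def sum_distrib_left mult.assoc)

lemma cinner_sum_left: "cinner (\<Sum>j\<in>S. f j) y = (\<Sum>j\<in>S. cinner (f j) y)"
  unfolding cinner_def
  by (induct S rule: infinite_finite_induct) (auto simp: sum.distrib distrib_right)

lemma cnj_cinner: "cnj (cinner x y) = cinner y x"
  by (simp add: cinner_def mult.commute)

lemma cinner_self_eq_norm_square: "cinner x x = complex_of_real ((norm x)\<^sup>2)"
proof -
  have "cinner x x = (\<Sum>i\<in>UNIV. complex_of_real ((cmod (x$i))\<^sup>2))"
    unfolding cinner_def by (rule sum.cong[OF refl]) (rule complex_norm_square[symmetric])
  also have "\<dots> = complex_of_real (\<Sum>i\<in>UNIV. (cmod (x$i))\<^sup>2)"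
    by simp
  also have "(\<Sum>i\<in>UNIV. (cmod (x$i))\<^sup>2) = (norm x)\<^sup>2"
    unfolding norm_vec_def L2_set_def by (simp add: sum_nonneg)
  finally show ?thesis .
qed

definition rank_one :: "complex^'d \<Rightarrow> complex^'d \<Rightarrow> complex^'d^'d" where
  "rank_one a b = (\<chi> i j. a$i * cnj (b$j))"

lemma outer_eq_rank_one: "outer v = rank_one v v"
  by (simp add: outer_def rank_one_def)

lemma rank_one_mult: "rank_one a b ** rank_one c e = rank_one (cinner c b *s a) e"
  unfolding rank_one_def matrix_matrix_mult_def cinner_def
  by (simp add: vec_eq_iff sum_distrib_left sum_distrib_right mult_ac)

lemma trace_rank_one: "trace (rank_one a b) = cinner a b"
  by (simp add: trace_def rank_one_def cinner_def)

lemma trace_outer_mult3: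
  "trace (outer a ** outer b ** outer c) = cinner b a * cinner c b * cinner a c"
  by (simp add: outer_eq_rank_one rank_one_mult trace_rank_one cinner_scale_left)

lemma trace_mult3_unitary_conj:
  assumes "unitary U"
  shows "trace ((U ** A ** cadj U) ** (U ** B ** cadj U) ** (U ** C ** cadj U))
    = trace (A ** B ** C)"
proof -
  have inv: "cadj U ** U = mat 1" using assms unfolding unitary_def by blast
  have cancel: "cadj U ** (U ** X) = X" for X :: "complex^'a^'a"
    by (simp add: matrix_mul_assoc inv)
  have "trace ((U ** A ** cadj U) ** (U ** B ** cadj U) ** (U ** C ** cadj U))
      = trace (U ** ((A ** B ** C) ** cadj U))"
    by (simp add: matrix_mul_assoc[symmetric] cancel)
  also have "\<dots> = trace (((A ** B ** C) ** cadj U) ** U)"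
    by (rule trace_mul_sym)
  also have "\<dots> = trace (A ** B ** C)"
    by (simp add: matrix_mul_assoc[symmetric] inv)
  finally show ?thesis .
qed

definition triple_product :: "(nat \<Rightarrow> complex^'d) \<Rightarrow> nat \<Rightarrow> nat \<Rightarrow> nat \<Rightarrow> complex" where
  "triple_product \<phi> j k l = cinner (\<phi> j) (\<phi> k) * cinner (\<phi> k) (\<phi> l) * cinner (\<phi> l) (\<phi> j)"

lemma triple_product_eq_trace:
  "triple_product \<phi> j k l = trace (outer (\<phi> l) ** outer (\<phi> k) ** outer (\<phi> j))"
  by (simp add: triple_product_def trace_outer_mult3 mult_ac)

lemma triple_product_swap: "triple_product \<phi> k j l = cnj (triple_product \<phi> j k l)"
  by (simp add: triple_product_def cnj_cinner mult_ac)

lemma triple_product_induced_perm: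
  assumes "\<sigma> \<in> induced_perms n \<phi>" and "{j, k, l} \<subseteq> {1..n}"
  shows "triple_product \<phi> (\<sigma> j) (\<sigma> k) (\<sigma> l) = triple_product \<phi> j k l"
proof -
  from assms(1) obtain U where "unitary U"
    and conj: "\<And>j. j \<in> {1..n} \<Longrightarrow> U ** outer (\<phi> j) ** cadj U = outer (\<phi> (\<sigma> j))"
    unfolding induced_perms_def by blast
  then show ?thesis
    using trace_mult3_unitary_conj[of U "outer (\<phi> l)" "outer (\<phi> k)" "outer (\<phi> j)"] assms(2)
    by (simp add: triple_product_eq_trace conj)
qed

lemma triple_product_triply_covariant:
  assumes "k_covariant 3 n \<phi>"
    and "distinct [j, k, l]" "{j, k, l} \<subseteq> {1..n}"
    and "distinct [j', k', l']" "{j', k', l'} \<subseteq> {1..n}"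
  shows "triple_product \<phi> j' k' l' = triple_product \<phi> j k l"
proof -
  let ?a = "(!) [j, k, l]" and ?b = "(!) [j', k', l']"
  have "inj_on ?a {..<3} \<and> ?a ` {..<3} \<subseteq> {1..n} \<and> inj_on ?b {..<3} \<and> ?b ` {..<3} \<subseteq> {1..n}"
    using assms(2-5) by (simp add: inj_on_nth lessThan_atLeast0 nth_image)
  then obtain \<sigma> where "\<sigma> \<in> induced_perms n \<phi>" and maps: "\<forall>i<3. \<sigma> (?a i) = ?b i"
    using assms(1)[unfolded k_covariant_def, rule_format, of ?a ?b] by blast
  moreover have "\<sigma> j = j'" "\<sigma> k = k'" "\<sigma> l = l'"
    using maps[rule_format, of 0] maps[rule_format, of 1] maps[rule_format, of 2] by simp_all
  ultimately show ?thesis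
    using triple_product_induced_perm[OF _ assms(3)] by metis
qed

locale equiangular_tight_frame =
  fixes n :: nat and \<phi> :: "nat \<Rightarrow> complex^'d" and \<alpha> :: real
  assumes tight: "\<And>x. x = complex_of_real (real CARD('d) / real n) *s
                         (\<Sum>j\<in>{1..n}. cinner x (\<phi> j) *s \<phi> j)"
    and unit_norm: "\<And>j. j \<in> {1..n} \<Longrightarrow> norm (\<phi> j) = 1"
    and equiangular:
      "\<And>j k. j \<in> {1..n} \<Longrightarrow> k \<in> {1..n} \<Longrightarrow> j \<noteq> k \<Longrightarrow> cmod (cinner (\<phi> j) (\<phi> k)) = \<alpha>"

lemma is_ETF_imp_equiangular_tight_frame:
  assumes "is_ETF n \<phi>"
  obtains \<alpha> where "equiangular_tight_frame n \<phi> \<alpha>"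
  using assms that unfolding is_ETF_def equiangular_tight_frame_def Ball_def by meson

context equiangular_tight_frame
begin

lemma frame_size_pos: "n > 0"
proof (rule ccontr)
  assume "\<not> n > 0"
  then have "{1..n} = {}"
    by simp
  then have "(vec 1 :: complex^'d) = 0"
    using tight[of "vec 1"] by (simp only: sum.empty vector_smult_rzero)
  then show False by (metis vec_component zero_index zero_neq_one)
qed

lemma gram_reproducing:
  "cinner (\<phi> k) (\<phi> m) = complex_of_real (real CARD('d) / real n) *
     (\<Sum>j\<in>{1..n}. cinner (\<phi> k) (\<phi> j) * cinner (\<phi> j) (\<phi> m))"
  by (subst tight[of "\<phi> k"]) (simp add: cinner_scale_left cinner_sum_left)

lemma cinner_self_frame: "j \<in> {1..n} \<Longrightarrow> cinner (\<phi> j) (\<phi> j) = 1"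
  by (simp add: unit_norm cinner_self_eq_norm_square)

lemma cinner_mult_swap:
  assumes "j \<in> {1..n}" "k \<in> {1..n}" "j \<noteq> k"
  shows "cinner (\<phi> j) (\<phi> k) * cinner (\<phi> k) (\<phi> j) = complex_of_real (\<alpha>\<^sup>2)"
  using equiangular[OF assms] complex_norm_square[of "cinner (\<phi> j) (\<phi> k)"]
  by (simp add: cnj_cinner)

lemma cmod_triple_product:
  assumes "distinct [j, k, l]" "{j, k, l} \<subseteq> {1..n}"
  shows "cmod (triple_product \<phi> j k l) = \<alpha> ^ 3"
  using assms by (simp add: triple_product_def norm_mult equiangular power3_eq_cube)

lemma diagonal_equation:
  "real n = real CARD('d) + real CARD('d) * (real n - 1) * \<alpha>\<^sup>2"
proof -
  have one: "1 \<in> {1..n}" using frame_size_pos by simp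
  have "(\<Sum>j\<in>{1..n}. cinner (\<phi> 1) (\<phi> j) * cinner (\<phi> j) (\<phi> 1))
      = 1 + (\<Sum>j\<in>{1..n} - {1}. complex_of_real (\<alpha>\<^sup>2))"
    using one by (simp add: sum.remove[of _ 1] cinner_self_frame cinner_mult_swap)
  also have "\<dots> = complex_of_real (1 + (real n - 1) * \<alpha>\<^sup>2)"
    using one frame_size_pos by (simp add: of_nat_diff)
  finally have "complex_of_real 1
      = complex_of_real (real CARD('d) / real n * (1 + (real n - 1) * \<alpha>\<^sup>2))"
    using gram_reproducing[of 1 1] cinner_self_frame[OF one] by simp
  then have "1 = real CARD('d) / real n * (1 + (real n - 1) * \<alpha>\<^sup>2)"
    using of_real_eq_iff by blast
  then show ?thesis
    using frame_size_pos by (simp add: field_simps)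
qed

lemma at_most_two_vectors:
  assumes "n \<le> 2"
  shows "CARD('d) = 1 \<or> n = CARD('d)"
proof -
  have "real CARD('d) * (real n - 1) * \<alpha>\<^sup>2 \<ge> 0"
    using frame_size_pos by simp
  then have "CARD('d) \<le> n" and "n = 1 \<longrightarrow> CARD('d) = 1"
    using diagonal_equation by auto
  moreover have "CARD('d) > 0"
    by (simp add: finite_UNIV_card_ge_0)
  ultimately show ?thesis
    using assms by linarith
qed

text \<open>The \<open>(k, m)\<close> entry of \<open>G = (d/n) G\<^sup>2\<close>, multiplied by \<open>G\<^sub>m\<^sub>k\<close>, turns each summand into a
  triple product.\<close>

lemma offdiagonal_equation:
  assumes "k \<in> {1..n}" "m \<in> {1..n}" "k \<noteq> m"
    and const: "\<And>j. j \<in> {1..n} - {k, m} \<Longrightarrow> triple_product \<phi> k j m = complex_of_real t"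
  shows "real n * \<alpha>\<^sup>2 = real CARD('d) * (2 * \<alpha>\<^sup>2 + (real n - 2) * t)"
proof -
  let ?g = "\<lambda>j l. cinner (\<phi> j) (\<phi> l)"
  have summand: "?g k j * ?g j m * ?g m k = triple_product \<phi> k j m" for j
    by (simp add: triple_product_def)
  have "(\<Sum>j\<in>{1..n}. ?g k j * ?g j m) * ?g m k
      = (\<Sum>j\<in>{1..n}. triple_product \<phi> k j m)"
    by (simp add: sum_distrib_right summand)
  also have "\<dots> = triple_product \<phi> k k m + triple_product \<phi> k m m
      + (\<Sum>j\<in>{1..n} - {k, m}. complex_of_real t)"
    using assms(1-3) const
    by (simp add: sum.remove[of _ k] sum.remove[of _ m] insert_Diff_if Diff_insert2[symmetric])
  also have "\<dots> = complex_of_real (2 * \<alpha>\<^sup>2 + (real n - 2) * t)"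
    using assms(1-3)
    by (simp add: triple_product_def cinner_self_frame cinner_mult_swap card_Diff_subset of_nat_diff)
  finally have "complex_of_real (\<alpha>\<^sup>2)
      = complex_of_real (real CARD('d) / real n * (2 * \<alpha>\<^sup>2 + (real n - 2) * t))"
    using gram_reproducing[of k m] cinner_mult_swap[OF assms(1-3)] by (simp add: mult.assoc)
  then have "\<alpha>\<^sup>2 = real CARD('d) / real n * (2 * \<alpha>\<^sup>2 + (real n - 2) * t)"
    using of_real_eq_iff by blast
  then show ?thesis
    using frame_size_pos by (simp add: field_simps)
qed

end

lemma parameter_equations_trichotomy:
  fixes N D a t :: real
  assumes "N > 0"
    and diagonal: "N = D + D * (N - 1) * a\<^sup>2"
    and offdiagonal: "N * a\<^sup>2 = D * (2 * a\<^sup>2 + (N - 2) * t)"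
    and "t\<^sup>2 = a ^ 6"
  shows "D = 1 \<or> N = D \<or> N = D + 1"
proof (cases "a = 0")
  case True
  then show ?thesis using diagonal by simp
next
  case False
  have "D * (N - 2) * t = (N - 2 * D) * a\<^sup>2"
    using offdiagonal by (simp add: algebra_simps)
  have "(D\<^sup>2 * (N - 2)\<^sup>2 * a\<^sup>2) * a ^ 4 = D\<^sup>2 * (N - 2)\<^sup>2 * t\<^sup>2"
    using \<open>t\<^sup>2 = a ^ 6\<close> by (simp flip: power_add)
  also have "\<dots> = (D * (N - 2) * t)\<^sup>2"
    by (simp add: power_mult_distrib)
  also have "\<dots> = (N - 2 * D)\<^sup>2 * a ^ 4"
    by (simp add: \<open>D * (N - 2) * t = (N - 2 * D) * a\<^sup>2\<close> power_mult_distrib flip: power_mult)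
  finally have "(D\<^sup>2 * (N - 2)\<^sup>2 * a\<^sup>2) * a ^ 4 = (N - 2 * D)\<^sup>2 * a ^ 4" .
  moreover have "a ^ 4 \<noteq> 0"
    using False by simp
  ultimately have squared: "D\<^sup>2 * (N - 2)\<^sup>2 * a\<^sup>2 = (N - 2 * D)\<^sup>2"
    by (metis mult_right_cancel)
  have "D * (N - 2)\<^sup>2 * (N - D) = (D\<^sup>2 * (N - 2)\<^sup>2 * a\<^sup>2) * (N - 1)"
    by (subst diagonal) (simp add: power2_eq_square algebra_simps)
  then have "D * (N - 2)\<^sup>2 * (N - D) = (N - 2 * D)\<^sup>2 * (N - 1)"
    using squared by simp
  moreover have "(D - 1) * (N - D - 1) * N\<^sup>2 = D * (N - 2)\<^sup>2 * (N - D) - (N - 2 * D)\<^sup>2 * (N - 1)"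
    by (simp add: power2_eq_square algebra_simps)
  ultimately have "(D - 1) * (N - D - 1) * N\<^sup>2 = 0" by simp
  then show ?thesis using \<open>N > 0\<close> by auto
qed

theorem mainTheorem1:
  fixes \<phi> :: "nat \<Rightarrow> complex^'d" and n :: nat
  assumes "is_ETF n \<phi>" and "k_covariant 3 n \<phi>"
  shows "CARD('d) = 1 \<or> n = CARD('d) \<or> n = CARD('d) + 1"
proof -
  obtain \<alpha> where "equiangular_tight_frame n \<phi> \<alpha>"
    using assms(1) by (rule is_ETF_imp_equiangular_tight_frame)
  then interpret equiangular_tight_frame n \<phi> \<alpha> .
  show ?thesis
  proof (cases "n \<le> 2")
    case True
    then show ?thesis using at_most_two_vectors by blast
  next
    case False
    define T where "T = triple_product \<phi> 1 2 3"
    have const: "triple_product \<phi> j k l = T" if "distinct [j, k, l]" "{j, k, l} \<subseteq> {1..n}" for j k l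
      unfolding T_def using False that
      by (intro triple_product_triply_covariant[OF assms(2)]) auto
    have "cnj T = T"
      using triple_product_swap[of \<phi> 2 1 3] const[of 2 1 3] False by (simp add: T_def)
    then have T_real: "T = complex_of_real (Re T)"
      by (metis Reals_cnj_iff of_real_Re)
    have "cmod T = \<alpha> ^ 3"
      using cmod_triple_product[of 1 2 3] False by (simp add: T_def)
    then have "\<bar>Re T\<bar> = \<alpha> ^ 3"
      using T_real by (metis norm_of_real)
    then have "(Re T)\<^sup>2 = (\<alpha> ^ 3)\<^sup>2"
      by (metis power2_abs)
    then have t_square: "(Re T)\<^sup>2 = \<alpha> ^ 6"
      by (simp flip: power_mult)
    have offdiagonal: "real n * \<alpha>\<^sup>2 = real CARD('d) * (2 * \<alpha>\<^sup>2 + (real n - 2) * Re T)"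
      using False const by (intro offdiagonal_equation[of 1 2]) (auto simp flip: T_real)
    have "real CARD('d) = 1 \<or> real n = real CARD('d) \<or> real n = real CARD('d) + 1"
      using parameter_equations_trichotomy[OF _ diagonal_equation offdiagonal t_square]
        frame_size_pos by simp
    then show ?thesis by linarith
  qed
qed

end
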